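(* Let $D$ be a virtual knot diagram of a virtual knot. Then $D$ can be transformed into the trivial knot diagram by a finite sequence of (classical) Reidemeister moves, virtual Reidemeister moves, and forbidden detour moves. Moreover, if $D$ has $c$ real crossings, then this can be done using at most $\frac{(c-1)(2c^{2}+11c-3)}{24}$ forbidden detour moves if $c$ is odd, and at most $\frac{c(2c^{2}+9c-14)}{24}$ forbidden detour moves if $c$ is even.
   Context: Virtual knots are equivalence classes of virtual knot diagrams (planar diagrams with real (classical) crossings and virtual crossings) under classical Reidemeister moves and virtual Reidemeister moves; equivalently, equivalence classes of Gauss diagrams under the Gauss-diagram versions of the Reidemeister moves. The Gauss diagram of a diagram with $c$ real crossings is an oriented circle with $c$ signed arrows, one per real crossing, joining the two preimages of the crossing (oriented from the over-crossing preimage to the under-crossing preimage, signed by the local writhe of the crossing); virtual crossings are not recorded. A forbidden detour move (the $F_2'$-move of Kanenobu) is the local move on virtual knot diagrams whose effect on the Gauss diagram is the following: if the head of one arrow and the tail of a different arrow are adjacent on the circle (no other arrow endpoints between them), their positions are exchanged, with all signs kept. The trivial knot diagram is the diagram with no crossings. *)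

theory Defs
  imports Complex_Main
begin

text \<open>An endpoint is a pair (arrow label, is_tail): the tail of an
arrow is the over-crossing preimage, the head the under-crossing preimage.
A Gauss diagram is a cyclic word of endpoints (represented by a list, rotations
being a trivial step) together with a sign function on arrow labels
(True = positive local writhe).\<close>

type_synonym endpt = "nat \<times> bool"
type_synonym gd = "endpt list \<times> (nat \<Rightarrow> bool)"

definition wf_gd :: "endpt list \<Rightarrow> bool" where
  "wf_gd w \<longleftrightarrow> distinct w \<and> (\<forall>a b. (a, b) \<in> set w \<longrightarrow> (a, \<not> b) \<in> set w)"

definition labels :: "endpt list \<Rightarrow> nat set" where
  "labels w = fst ` set w"

definition sg :: "bool \<Rightarrow> int" where
  "sg b = (if b then 1 else -1)"

text \<open>Steps that do not change the Gauss diagram: rotating the cyclic word, and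
changing the sign function on labels not used by any arrow.\<close>
inductive same_gd :: "gd \<Rightarrow> gd \<Rightarrow> bool" where
  rot: "same_gd (e # w, s) (w @ [e], s)"
| resign: "(\<forall>a\<in>labels w. s a = s' a) \<Longrightarrow> same_gd (w, s) (w, s')"

definition r1 :: "gd \<Rightarrow> gd \<Rightarrow> bool" where
  "r1 G G' \<longleftrightarrow> (\<exists>u v a x s. G = (u @ [(a, x), (a, \<not> x)] @ v, s) \<and> G' = (u @ v, s))"

definition r2 :: "gd \<Rightarrow> gd \<Rightarrow> bool" where
  "r2 G G' \<longleftrightarrow> (\<exists>u v y a b t Q s.
      G = (u @ [(a, t), (b, t)] @ v @ Q @ y, s) \<and>
      (Q = [(a, \<not> t), (b, \<not> t)] \<or> Q = [(b, \<not> t), (a, \<not> t)]) \<and>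
      a \<noteq> b \<and> s a \<noteq> s b \<and> G' = (u @ v @ y, s))"

text \<open>Reidemeister III configuration: segments A, B, C (strands 1, 2, 3), arrows
p (between strands 1,2), q (2,3), r (3,1); t1: strand 1 over 2, t2: 2 over 3,
t3: 3 over 1. sigma_i: strand i meets strand i-1 before strand i+1 (mod 3).
The over/under relation must be acyclic and the signs must satisfy the
realizability condition of a triangle of three strands.\<close>
definition r3_config :: "(nat \<Rightarrow> bool) \<Rightarrow> endpt list \<Rightarrow> endpt list \<Rightarrow> endpt list \<Rightarrow> bool" where
  "r3_config s A B C \<longleftrightarrow> (\<exists>p q r t1 t2 t3.
      p \<noteq> q \<and> q \<noteq> r \<and> p \<noteq> r \<and>
      (A = [(r, \<not> t3), (p, t1)] \<or> A = [(p, t1), (r, \<not> t3)]) \<and>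
      (B = [(p, \<not> t1), (q, t2)] \<or> B = [(q, t2), (p, \<not> t1)]) \<and>
      (C = [(q, \<not> t2), (r, t3)] \<or> C = [(r, t3), (q, \<not> t2)]) \<and>
      \<not> (t1 = t2 \<and> t2 = t3) \<and>
      (let \<sigma>1 = (hd A = (r, \<not> t3)); \<sigma>2 = (hd B = (p, \<not> t1)); \<sigma>3 = (hd C = (q, \<not> t2)) in
        sg (s p) * sg t1 * sg \<sigma>1 * sg \<sigma>2 = sg (s q) * sg t2 * sg \<sigma>2 * sg \<sigma>3 \<and>
        sg (s q) * sg t2 * sg \<sigma>2 * sg \<sigma>3 = sg (s r) * sg t3 * sg \<sigma>3 * sg \<sigma>1))"

definition r3 :: "gd \<Rightarrow> gd \<Rightarrow> bool" where
  "r3 G G' \<longleftrightarrow> (\<exists>x0 x1 x2 x3 A B C s.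
      G = (x0 @ A @ x1 @ B @ x2 @ C @ x3, s) \<and>
      G' = (x0 @ rev A @ x1 @ rev B @ x2 @ rev C @ x3, s) \<and>
      r3_config s A B C)"

text \<open>Classical and virtual Reidemeister moves on Gauss diagrams (virtual moves
do not change the Gauss diagram), restricted to well-formed diagrams.\<close>
definition rmove :: "gd \<Rightarrow> gd \<Rightarrow> bool" where
  "rmove G G' \<longleftrightarrow> wf_gd (fst G) \<and> wf_gd (fst G') \<and>
     (same_gd G G' \<or> r1 G G' \<or> r1 G' G \<or> r2 G G' \<or> r2 G' G \<or> r3 G G' \<or> r3 G' G)"

definition fmove :: "gd \<Rightarrow> gd \<Rightarrow> bool" where
  "fmove G G' \<longleftrightarrow> wf_gd (fst G) \<and> wf_gd (fst G') \<and>
     (\<exists>u v p q s. G = (u @ [p, q] @ v, s) \<and> G' = (u @ [q, p] @ v, s) \<and>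
        fst p \<noteq> fst q \<and> snd p \<noteq> snd q)"

inductive reach :: "gd \<Rightarrow> gd \<Rightarrow> nat \<Rightarrow> bool" where
  refl: "reach G G 0"
| rstep: "rmove G G' \<Longrightarrow> reach G' H k \<Longrightarrow> reach G H k"
| fstep: "fmove G G' \<Longrightarrow> reach G' H k \<Longrightarrow> reach G H (Suc k)"

end

theory Submission
  imports Defs "HOL-Library.Multiset"
begin

text \<open>Induction on the number of arrows. Pick an innermost arrow: its two endpoints bound an
arc S of the circle on which every arrow occurs at most once. Forbidden detour moves let the
two endpoints move towards each other: an endpoint of S next to one of them that is of the
opposite kind (head versus tail) is slid out of the arc, and otherwise the arc contains an
adjacent pair in the wrong order, whose exchange removes one inversion. Hence at most
|S| + |S|^2/4 moves make the arrow removable by Reidemeister I, and |S| is at most c - 1.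
Summing (c - 1) + (c - 1)^2/4 over the arrows gives the stated bound.\<close>

lemma reach_trans: "reach G H k \<Longrightarrow> reach H K l \<Longrightarrow> reach G K (k + l)"
  by (induction rule: reach.induct) (auto intro: reach.intros)

lemma wf_gd_swap: "wf_gd (u @ [p, q] @ v) \<Longrightarrow> wf_gd (u @ [q, p] @ v)"
  unfolding wf_gd_def by auto

lemma wf_gd_mset_eq: "mset w = mset w' \<Longrightarrow> wf_gd w \<Longrightarrow> wf_gd w'"
  unfolding wf_gd_def using mset_eq_imp_distinct_iff mset_eq_setD by blast

lemma fmove_swap:
  assumes "wf_gd (u @ [p, q] @ v)" "fst p \<noteq> fst q" "snd p \<noteq> snd q"
  shows "fmove (u @ [p, q] @ v, s) (u @ [q, p] @ v, s)"
  unfolding fmove_def fst_conv using assms wf_gd_swap[OF assms(1)]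
  by (intro conjI exI[of _ u] exI[of _ v] exI[of _ p] exI[of _ q] exI[of _ s]) simp_all

lemma
  assumes wf: "wf_gd (u @ [(a, b), (a, \<not> b)] @ v)"
  shows wf_gd_remove_arrow: "wf_gd (u @ v)"
    and labels_remove_arrow: "labels (u @ v) = labels (u @ [(a, b), (a, \<not> b)] @ v) - {a}"
proof -
  have a_notin: "a \<notin> fst ` set (u @ v)"
  proof
    assume "a \<in> fst ` set (u @ v)"
    then obtain c where "(a, c) \<in> set (u @ v)"
      by force
    moreover have "c = b \<or> c = (\<not> b)"
      by blast
    ultimately show False
      using wf unfolding wf_gd_def by auto
  qed
  have "(c, \<not> z) \<in> set (u @ v)" if "(c, z) \<in> set (u @ v)" for c z
  proof -
    have "(c, \<not> z) \<in> set (u @ [(a, b), (a, \<not> b)] @ v)"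
      using wf that unfolding wf_gd_def by auto
    moreover have "c \<noteq> a"
      using a_notin that by force
    ultimately show ?thesis
      by auto
  qed
  then show "wf_gd (u @ v)"
    using wf unfolding wf_gd_def by simp
  show "labels (u @ v) = labels (u @ [(a, b), (a, \<not> b)] @ v) - {a}"
    using a_notin unfolding labels_def by auto
qed

lemma rmove_remove_arrow:
  assumes "wf_gd (u @ [(a, b), (a, \<not> b)] @ v)"
  shows "rmove (u @ [(a, b), (a, \<not> b)] @ v, s) (u @ v, s)"
  using assms wf_gd_remove_arrow[OF assms] unfolding rmove_def r1_def by auto

fun inversions :: "('a \<Rightarrow> bool) \<Rightarrow> 'a list \<Rightarrow> nat" where
  "inversions P [] = 0"
| "inversions P (x # xs) = (if P x then length (filter (\<lambda>y. \<not> P y) xs) else 0) + inversions P xs"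

lemma inversions_append:
  "inversions P (xs @ ys) =
     inversions P xs + inversions P ys + length (filter P xs) * length (filter (\<lambda>y. \<not> P y) ys)"
  by (induction xs) auto

lemma inversions_le_product:
  "inversions P xs \<le> length (filter P xs) * length (filter (\<lambda>y. \<not> P y) xs)"
  by (induction xs) auto

lemma inversions_le_quarter_square: "inversions P xs \<le> length xs * length xs div 4"
proof -
  define h k where "h = length (filter P xs)" and "k = length (filter (\<lambda>y. \<not> P y) xs)"
  have "h + k = length xs"
    unfolding h_def k_def by (rule sum_length_filter_compl)
  moreover have "4 * (h * k) \<le> (h + k) * (h + k)"
  proof -
    have "4 * (int h * int k) \<le> (int h + int k) * (int h + int k)"
      using zero_le_power2[of "int h - int k"] by (simp add: power2_eq_square algebra_simps)
    then have "int (4 * (h * k)) \<le> int ((h + k) * (h + k))"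
      by simp
    then show ?thesis
      by (simp only: of_nat_le_iff)
  qed
  ultimately have "h * k \<le> length xs * length xs div 4"
    by simp
  then show ?thesis
    using inversions_le_product[of P xs] unfolding h_def k_def by linarith
qed

lemma adjacent_switch:
  assumes "xs \<noteq> []" "P (hd xs)" "\<not> P (last xs)"
  shows "\<exists>ys p q zs. xs = ys @ [p, q] @ zs \<and> P p \<and> \<not> P q"
  using assms
proof (induction xs)
  case (Cons x xs)
  then have "xs \<noteq> []" "P x" "\<not> P (last xs)"
    by (auto split: if_splits)
  show ?case
  proof (cases "P (hd xs)")
    case True
    then obtain ys p q zs where "xs = ys @ [p, q] @ zs" "P p" "\<not> P q"
      using Cons.IH \<open>xs \<noteq> []\<close> \<open>\<not> P (last xs)\<close> by blast
    then have "x # xs = (x # ys) @ [p, q] @ zs" "P p" "\<not> P q"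
      by simp_all
    then show ?thesis
      by blast
  next
    case False
    then have "x # xs = [] @ [x, hd xs] @ tl xs" "P x" "\<not> P (hd xs)"
      using \<open>xs \<noteq> []\<close> \<open>P x\<close> by simp_all
    then show ?thesis
      by blast
  qed
qed simp

lemma arc_sweep_step:
  assumes wf: "wf_gd (u @ [(a, b)] @ S @ [(a, \<not> b)] @ v)"
    and inner: "distinct (map fst ((a, b) # S))" and "S \<noteq> []"
  shows "\<exists>S1 S' S2.
    fmove (u @ [(a, b)] @ S @ [(a, \<not> b)] @ v, s)
      ((u @ S1) @ [(a, b)] @ S' @ [(a, \<not> b)] @ (S2 @ v), s) \<and>
    mset (S1 @ S' @ S2) = mset S \<and>
    length S' + inversions (\<lambda>e. snd e = b) S' < length S + inversions (\<lambda>e. snd e = b) S"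
proof -
  let ?P = "\<lambda>e :: endpt. snd e = b"
  consider (first) "\<not> ?P (hd S)" | (last) "?P (last S)" | (inside) "?P (hd S)" "\<not> ?P (last S)"
    by blast
  then show ?thesis
  proof cases
    case first
    then obtain e S' where S: "S = e # S'" "snd e \<noteq> b"
      using \<open>S \<noteq> []\<close> by (cases S) auto
    have "fmove (u @ [(a, b), e] @ (S' @ [(a, \<not> b)] @ v), s)
                (u @ [e, (a, b)] @ (S' @ [(a, \<not> b)] @ v), s)"
      by (rule fmove_swap) (use wf inner S in auto)
    then show ?thesis
      using S by (intro exI[of _ "[e]"] exI[of _ S'] exI[of _ "[]"]) simp
  next
    case last
    then obtain S' e where S: "S = S' @ [e]" "snd e = b"
      using \<open>S \<noteq> []\<close> by (cases S rule: rev_cases) auto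
    have "fmove ((u @ [(a, b)] @ S') @ [e, (a, \<not> b)] @ v, s)
                ((u @ [(a, b)] @ S') @ [(a, \<not> b), e] @ v, s)"
      by (rule fmove_swap) (use wf inner S in auto)
    then show ?thesis
      using S by (intro exI[of _ "[]"] exI[of _ S'] exI[of _ "[e]"]) (simp add: inversions_append)
  next
    case inside
    then obtain ys p q zs where S: "S = ys @ [p, q] @ zs" "snd p = b" "snd q \<noteq> b"
      using adjacent_switch[of S ?P] \<open>S \<noteq> []\<close> by blast
    have "fmove ((u @ [(a, b)] @ ys) @ [p, q] @ (zs @ [(a, \<not> b)] @ v), s)
                ((u @ [(a, b)] @ ys) @ [q, p] @ (zs @ [(a, \<not> b)] @ v), s)"
      by (rule fmove_swap) (use wf inner S in auto)
    then show ?thesis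
      using S by (intro exI[of _ "[]"] exI[of _ "ys @ [q, p] @ zs"] exI[of _ "[]"])
        (simp add: inversions_append)
  qed
qed

lemma arc_sweep:
  assumes "wf_gd (u @ [(a, b)] @ S @ [(a, \<not> b)] @ v)" "distinct (map fst ((a, b) # S))"
  shows "\<exists>S1 S2 k.
    reach (u @ [(a, b)] @ S @ [(a, \<not> b)] @ v, s) (u @ S1 @ [(a, b), (a, \<not> b)] @ S2 @ v, s) k \<and>
    k \<le> length S + inversions (\<lambda>e. snd e = b) S \<and> mset (S1 @ S2) = mset S"
  using assms
proof (induction "length S + inversions (\<lambda>e. snd e = b) S" arbitrary: u v S rule: less_induct)
  case less
  show ?case
  proof (cases "S = []")
    case True
    then show ?thesis
      by (intro exI[of _ "[]"] exI[of _ "[]"] exI[of _ 0]) (simp add: reach.refl)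
  next
    case False
    then obtain S1 S' S2 where
      move: "fmove (u @ [(a, b)] @ S @ [(a, \<not> b)] @ v, s)
                   ((u @ S1) @ [(a, b)] @ S' @ [(a, \<not> b)] @ (S2 @ v), s)"
      and mset_S: "mset (S1 @ S' @ S2) = mset S"
      and smaller: "length S' + inversions (\<lambda>e. snd e = b) S' <
                    length S + inversions (\<lambda>e. snd e = b) S"
      using arc_sweep_step[OF less.prems] by blast
    have "wf_gd ((u @ S1) @ [(a, b)] @ S' @ [(a, \<not> b)] @ (S2 @ v))"
      using move unfolding fmove_def by simp
    moreover have "distinct (map fst ((a, b) # S'))"
    proof -
      have "mset (map fst ((a, b) # S1 @ S' @ S2)) = mset (map fst ((a, b) # S))"
        using arg_cong[OF mset_S, of "image_mset fst"] by simp
      then have "distinct (map fst ((a, b) # S1 @ S' @ S2))"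
        using less.prems(2) mset_eq_imp_distinct_iff by blast
      then show ?thesis by auto
    qed
    ultimately obtain T1 T2 k where
      "reach ((u @ S1) @ [(a, b)] @ S' @ [(a, \<not> b)] @ (S2 @ v), s)
             ((u @ S1) @ T1 @ [(a, b), (a, \<not> b)] @ T2 @ (S2 @ v), s) k"
      "k \<le> length S' + inversions (\<lambda>e. snd e = b) S'" "mset (T1 @ T2) = mset S'"
      using less.hyps[OF smaller] by blast
    with move mset_S smaller show ?thesis
      by (intro exI[of _ "S1 @ T1"] exI[of _ "T2 @ S2"] exI[of _ "Suc k"])
        (auto intro: reach.fstep simp: algebra_simps)
  qed
qed

lemma reach_remove_innermost_arrow:
  assumes wf: "wf_gd (u @ [(a, b)] @ S @ [(a, \<not> b)] @ v)"
    and inner: "distinct (map fst ((a, b) # S))"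
  shows "\<exists>k w'. reach (u @ [(a, b)] @ S @ [(a, \<not> b)] @ v, s) (w', s) k \<and>
    k \<le> length S + length S * length S div 4 \<and> wf_gd w' \<and>
    labels w' = labels (u @ [(a, b)] @ S @ [(a, \<not> b)] @ v) - {a}"
proof -
  obtain S1 S2 k where
    "reach (u @ [(a, b)] @ S @ [(a, \<not> b)] @ v, s) (u @ S1 @ [(a, b), (a, \<not> b)] @ S2 @ v, s) k"
    and k: "k \<le> length S + inversions (\<lambda>e. snd e = b) S" and mset_S: "mset (S1 @ S2) = mset S"
    using arc_sweep[OF wf inner, of s] by blast
  then have sweep:
    "reach (u @ [(a, b)] @ S @ [(a, \<not> b)] @ v, s) ((u @ S1) @ [(a, b), (a, \<not> b)] @ (S2 @ v), s) k"
    by simp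
  have wf_swept: "wf_gd ((u @ S1) @ [(a, b), (a, \<not> b)] @ (S2 @ v))"
    by (rule wf_gd_mset_eq[OF _ wf]) (use mset_S in \<open>simp add: algebra_simps\<close>)
  have "reach (u @ [(a, b)] @ S @ [(a, \<not> b)] @ v, s) ((u @ S1) @ (S2 @ v), s) k"
    using reach_trans[OF sweep reach.rstep[OF rmove_remove_arrow[OF wf_swept] reach.refl]] by simp
  moreover have "k \<le> length S + length S * length S div 4"
    using k inversions_le_quarter_square[of "\<lambda>e. snd e = b" S] by linarith
  moreover have "labels ((u @ S1) @ [(a, b), (a, \<not> b)] @ (S2 @ v)) =
                 labels (u @ [(a, b)] @ S @ [(a, \<not> b)] @ v)"
    using mset_eq_setD[OF mset_S] unfolding labels_def by auto
  ultimately show ?thesis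
    using wf_gd_remove_arrow[OF wf_swept] labels_remove_arrow[OF wf_swept] by auto
qed

lemma not_distinct_map_decomp:
  "\<not> distinct (map f xs) \<Longrightarrow> \<exists>ys z zs z' vs. xs = ys @ [z] @ zs @ [z'] @ vs \<and> f z = f z'"
proof (induction xs)
  case (Cons x xs)
  show ?case
  proof (cases "f x \<in> f ` set xs")
    case True
    then obtain z' zs vs where "xs = zs @ z' # vs" "f z' = f x"
      by (metis imageE split_list)
    then show ?thesis by fastforce
  next
    case False
    with Cons obtain ys z zs z' vs where "xs = ys @ [z] @ zs @ [z'] @ vs" "f z = f z'"
      by auto
    then show ?thesis
      by (metis append_Cons)
  qed
qed simp

lemma innermost_arc:
  "w = u @ [x] @ S @ [y] @ v \<Longrightarrow> fst x = fst y \<Longrightarrow>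
   \<exists>u x S y v. w = u @ [x] @ S @ [y] @ v \<and> fst x = fst y \<and> distinct (map fst (x # S))"
proof (induction "length S" arbitrary: u x S y v rule: less_induct)
  case less
  show ?case
  proof (cases "distinct (map fst (x # S))")
    case False
    then obtain P p Q q R where xS: "x # S = P @ [p] @ Q @ [q] @ R" "fst p = fst q"
      using not_distinct_map_decomp by blast
    have "w = u @ (x # S) @ [y] @ v"
      using less.prems(1) by simp
    then have w: "w = (u @ P) @ [p] @ Q @ [q] @ (R @ [y] @ v)"
      using xS(1) by simp
    have "length Q < length S"
      using arg_cong[OF xS(1), of length] by simp
    from less.hyps[OF this w xS(2)] show ?thesis .
  qed (use less.prems in blast)
qed

lemma wf_gd_innermost_arrow:
  assumes wf: "wf_gd w" and "w \<noteq> []"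
  shows "\<exists>u a b S v. w = u @ [(a, b)] @ S @ [(a, \<not> b)] @ v \<and> distinct (map fst ((a, b) # S))"
proof -
  obtain a b w' where w: "w = (a, b) # w'"
    using \<open>w \<noteq> []\<close> by (metis list.exhaust surj_pair)
  then have "(a, \<not> b) \<in> set w'"
    using wf unfolding wf_gd_def by (metis (full_types) set_ConsD list.set_intros(1) prod.inject)
  then obtain S v where "w = [] @ [(a, b)] @ S @ [(a, \<not> b)] @ v"
    using w split_list by fastforce
  then obtain u x S y v
    where arc: "w = u @ [x] @ S @ [y] @ v" "fst x = fst y" "distinct (map fst (x # S))"
    using innermost_arc[of w "[]" "(a, b)" S "(a, \<not> b)" v] by auto
  have "x \<noteq> y"
    using wf arc(1) unfolding wf_gd_def by auto
  then have "y = (fst x, \<not> snd x)"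
    using arc(2) by (cases x, cases y) auto
  with arc show ?thesis
    by (metis prod.collapse)
qed

fun detour_bound :: "nat \<Rightarrow> nat" where
  "detour_bound 0 = 0"
| "detour_bound (Suc c) = detour_bound c + c + c * c div 4"

lemma reach_empty_within_detour_bound:
  "wf_gd w \<Longrightarrow> card (labels w) = c \<Longrightarrow> \<exists>k. reach (w, s) ([], s) k \<and> k \<le> detour_bound c"
proof (induction c arbitrary: w)
  case 0
  then have "w = []"
    unfolding labels_def by simp
  then show ?case
    using reach.refl by auto
next
  case (Suc c)
  have fin: "finite (labels w)"
    unfolding labels_def by simp
  then have "w \<noteq> []"
    using Suc.prems(2) unfolding labels_def by auto
  then obtain u a b S v where w: "w = u @ [(a, b)] @ S @ [(a, \<not> b)] @ v"
    and inner: "distinct (map fst ((a, b) # S))"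
    using wf_gd_innermost_arrow[OF Suc.prems(1)] by blast
  obtain k1 w' where sweep: "reach (w, s) (w', s) k1" "k1 \<le> length S + length S * length S div 4"
    and w': "wf_gd w'" "labels w' = labels w - {a}"
    using reach_remove_innermost_arrow[OF Suc.prems(1)[unfolded w] inner] w by blast
  have a: "a \<in> labels w"
    unfolding w labels_def by simp
  then obtain k2 where rest: "reach (w', s) ([], s) k2" "k2 \<le> detour_bound c"
    using Suc.IH[OF w'(1)] w'(2) fin Suc.prems(2) by auto
  have "length S = card (fst ` set S)"
    using distinct_card[of "map fst S"] inner by simp
  also have "\<dots> \<le> card (labels w - {a})"
    using inner fin by (intro card_mono) (auto simp: w labels_def)
  finally have "length S \<le> c"
    using a fin Suc.prems(2) by simp
  then have "k1 \<le> c + c * c div 4"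
    using sweep(2) by (meson add_le_mono div_le_mono mult_le_mono order_trans)
  then show ?case
    using reach_trans[OF sweep(1) rest(1)] rest(2) by auto
qed

lemma real_square_div_4:
  "real (c * c div 4) = (if even c then real c ^ 2 / 4 else (real c ^ 2 - 1) / 4)"
proof (cases "even c")
  case True
  then obtain n where "c = 2 * n" by blast
  then show ?thesis by (simp add: power2_eq_square)
next
  case False
  then obtain n where c: "c = 2 * n + 1" by (blast elim: oddE)
  then have "c * c div 4 = n * n + n"
    by (simp add: algebra_simps)
  then show ?thesis
    using c by (simp add: power2_eq_square algebra_simps)
qed

lemma detour_bound_closed_form:
  "24 * real (detour_bound c) =
     (if odd c then (real c - 1) * (2 * real c ^ 2 + 11 * real c - 3)
      else real c * (2 * real c ^ 2 + 9 * real c - 14))"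
proof (induction c)
  case (Suc c)
  then show ?case
    by (cases "even c") (simp_all add: real_square_div_4 power2_eq_square field_simps)
qed simp

theorem theorem1p1:
  fixes w :: "endpt list" and s :: "nat \<Rightarrow> bool" and c :: nat
  assumes "wf_gd w"
    and "card (labels w) = c"
  shows "\<exists>k s'. reach (w, s) ([], s') k \<and>
           (if odd c then real k \<le> (real c - 1) * (2 * real c ^ 2 + 11 * real c - 3) / 24
            else real k \<le> real c * (2 * real c ^ 2 + 9 * real c - 14) / 24)"
proof -
  obtain k where "reach (w, s) ([], s) k" "real k \<le> real (detour_bound c)"
    using reach_empty_within_detour_bound[OF assms] by auto
  then show ?thesis
    using detour_bound_closed_form[of c] by (intro exI[of _ k] exI[of _ s]) auto
qed

end
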